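(* Let $p$ be a prime and $\chi$ a primitive Dirichlet character modulo $p^m$ ($m\ge1$). Then for all integers $n\ge m$ and $k\ge0$, $$S_k(p^n,\chi)\equiv0\pmod{p^{n-1}}.$$ Furthermore, when $p=2$: if $m\ge3$, or $m=2$ and $k$ is even, or $m=1$ and $k$ is odd, then for all $n\ge\max\{m,2\}$, $$S_k(2^n,\chi)\equiv0\pmod{2^n}.$$
   Context: $S_k(N,\chi)=\sum_{j=1}^N\chi(j)j^k$. Values lie in the ring of algebraic integers of the cyclotomic field generated by the values of $\chi$, where congruences are taken. *)

theory Defs
  imports "HOL-Computational_Algebra.Polynomial" "HOL-Number_Theory.Cong" Complex_Main
begin

definition algebraic_int :: "complex \<Rightarrow> bool" where
  "algebraic_int x \<longleftrightarrow>
     (\<exists>q :: int poly. lead_coeff q = 1 \<and> poly (map_poly of_int q) x = 0)"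

text \<open>Congruence x = 0 mod d in the ring of algebraic integers
  (for x in a number field this is divisibility in its ring of integers).\<close>
definition alg_cong0 :: "complex \<Rightarrow> nat \<Rightarrow> bool" where
  "alg_cong0 x d \<longleftrightarrow> algebraic_int (x / of_nat d)"

definition dirichlet_char :: "nat \<Rightarrow> (nat \<Rightarrow> complex) \<Rightarrow> bool" where
  "dirichlet_char N \<chi> \<longleftrightarrow> N > 0 \<and> \<chi> 1 = 1 \<and>
     (\<forall>a b. \<chi> (a * b) = \<chi> a * \<chi> b) \<and>
     (\<forall>a. \<chi> (a + N) = \<chi> a) \<and>
     (\<forall>a. \<chi> a = 0 \<longleftrightarrow> \<not> coprime a N)"

text \<open>Primitive: no induced modulus d properly dividing N (Apostol's definition).\<close>
definition primitive_char :: "nat \<Rightarrow> (nat \<Rightarrow> complex) \<Rightarrow> bool" where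
  "primitive_char N \<chi> \<longleftrightarrow> dirichlet_char N \<chi> \<and>
     \<not> (\<exists>d. d dvd N \<and> d < N \<and>
           (\<forall>a. coprime a N \<and> [a = 1] (mod d) \<longrightarrow> \<chi> a = 1))"

definition char_power_sum :: "nat \<Rightarrow> nat \<Rightarrow> (nat \<Rightarrow> complex) \<Rightarrow> complex" where
  "char_power_sum k N \<chi> = (\<Sum>j = 1..N. \<chi> j * of_nat j ^ k)"

end

theory Submission
  imports Defs "Jordan_Normal_Form.Char_Poly"
begin

(* Everything happens in the ring Z[chi] spanned over Z by the values of chi: a finitely generated
   Z-module containing 1 and closed under multiplication, hence made of algebraic integers, so it
   suffices to divide by p^(n-1) (resp. 2^n) inside Z[chi].  Write j < p^n as j = r + h s with
   h = p^(n-1).  For n = m, primitivity makes the sums over s of chi(r + h s) vanish, so only the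
   differences (r + h s)^k - r^k survive, and they are multiples of h.  For n > m, chi is
   h-periodic and S_k(p^n) = p S_k(p^(n-1)) + (multiples of h), which gives the induction.
   For p = 2 one expands once more: (r + h)^k - r^k = k h r^(k-1) + (multiple of h^2), and the
   missing factor 2 in k h S_(k-1)(h) comes from k being even, from the first part when n > m, or
   for n = m >= 3 from a reflection argument using chi(x + 2^(m-1)) = - chi(x).  The case m = 1
   is void, since no character modulo 2 is primitive. *)

lemma algebraic_int_eigenvalue_of_int_mat:
  fixes M :: "int mat"
  assumes M: "M \<in> carrier_mat n n" and x: "eigenvalue (map_mat of_int M) x"
  shows "algebraic_int x"
proof -
  have "map_mat of_int M \<in> carrier_mat n n" using M by simp
  then have "poly (char_poly (map_mat of_int M)) x = 0"
    using eigenvalue_root_char_poly x by blast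
  moreover have "char_poly (map_mat of_int M) = map_poly of_int (char_poly M)"
    by (rule of_int_hom.char_poly_hom[OF M])
  moreover have "lead_coeff (char_poly M) = 1"
    using degree_monic_char_poly[OF M] by simp
  ultimately have "lead_coeff (char_poly M) = 1 \<and> poly (map_poly of_int (char_poly M)) x = 0"
    by metis
  then show ?thesis unfolding algebraic_int_def by blast
qed

text \<open>Multiplication by \<open>x\<close> preserving a finitely generated \<open>\<int>\<close>-module is given by an
  integer matrix having \<open>x\<close> as an eigenvalue, with the generators as eigenvector.\<close>
lemma algebraic_int_if_int_span_stable:
  fixes v :: "nat \<Rightarrow> complex"
  assumes "i0 < n" "v i0 \<noteq> 0"
    and stable: "\<And>i. i < n \<Longrightarrow> \<exists>c::nat \<Rightarrow> int. x * v i = (\<Sum>j<n. of_int (c j) * v j)"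
  shows "algebraic_int x"
proof -
  obtain C where C: "\<And>i. i < n \<Longrightarrow> x * v i = (\<Sum>j<n. of_int (C i j) * v j)"
    using stable by metis
  define M :: "int mat" where "M = mat n n (\<lambda>(i, j). C i j)"
  have M: "M \<in> carrier_mat n n" by (simp add: M_def)
  have "map_mat of_int M *\<^sub>v vec n v = x \<cdot>\<^sub>v vec n v"
  proof (rule eq_vecI)
    fix i assume "i < dim_vec (x \<cdot>\<^sub>v vec n v)"
    then have i: "i < n" by simp
    have "(map_mat of_int M *\<^sub>v vec n v) $ i = (\<Sum>j<n. of_int (C i j) * v j)"
      using i by (simp add: M_def scalar_prod_def atLeast0LessThan)
    with C[OF i] i show "(map_mat of_int M *\<^sub>v vec n v) $ i = (x \<cdot>\<^sub>v vec n v) $ i" by simp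
  qed (simp add: M_def)
  moreover have "vec n v \<noteq> 0\<^sub>v n"
    using assms(1,2) by (metis index_vec index_zero_vec(1))
  ultimately have "eigenvalue (map_mat of_int M) x"
    unfolding eigenvalue_def eigenvector_def using M by (intro exI[of _ "vec n v"]) auto
  then show ?thesis using algebraic_int_eigenvalue_of_int_mat[OF M] by blast
qed

lemma sum_lessThan_add_nat:
  fixes n :: nat
  shows "(\<Sum>j<m + n. f j) = (\<Sum>j<m. f j) + (\<Sum>j<n. f (m + j))"
  by (induction n) (simp_all add: add.assoc)

lemma sum_lessThan_mult_nat:
  fixes a b :: nat
  shows "(\<Sum>j<a * b. f j) = (\<Sum>r<a. \<Sum>s<b. f (r + a * s))"
proof (induction b)
  case (Suc b)
  have "(\<Sum>j<a * Suc b. f j) = (\<Sum>j<a * b. f j) + (\<Sum>r<a. f (a * b + r))"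
    using sum_lessThan_add_nat[of f "a * b" a] by (simp add: add.commute)
  then show ?case by (simp add: Suc sum.distrib add.commute)
qed simp

lemma power_Suc_add_eq:
  fixes r h :: "'a :: comm_ring_1"
  shows "\<exists>q. (r + h) ^ Suc k = r ^ Suc k + of_nat (Suc k) * h * r ^ k + h\<^sup>2 * q"
proof (induction k)
  case (Suc k)
  then obtain q where "(r + h) ^ Suc k = r ^ Suc k + of_nat (Suc k) * h * r ^ k + h\<^sup>2 * q" ..
  then have "(r + h) ^ Suc (Suc k) = r ^ Suc (Suc k) + of_nat (Suc (Suc k)) * h * r ^ Suc k
      + h\<^sup>2 * (of_nat (Suc k) * r ^ k + (r + h) * q)"
    by (simp add: algebra_simps power2_eq_square)
  then show ?case ..
qed (intro exI[of _ 0], simp)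

lemma image_residue_class:
  fixes d N r :: nat
  assumes "d dvd N" "r < d"
  shows "(\<lambda>s. r + d * s) ` {..<N div d} = {x. x < N \<and> x mod d = r}"
proof (intro equalityI subsetI)
  fix x assume "x \<in> (\<lambda>s. r + d * s) ` {..<N div d}"
  then obtain s where "s < N div d" "x = r + d * s" by blast
  moreover have "r + d * s < d * Suc s" using assms(2) by simp
  moreover have "d * Suc s \<le> d * (N div d)"
    using \<open>s < N div d\<close> by (intro mult_le_mono2) simp
  moreover have "d * (N div d) = N" using assms(1) by simp
  ultimately show "x \<in> {x. x < N \<and> x mod d = r}" using assms(2) by simp
next
  fix x assume "x \<in> {x. x < N \<and> x mod d = r}"
  then have "x = r + d * (x div d)" "x div d < N div d"
    using assms by (auto elim!: dvdE simp: mult.commute less_mult_imp_div_less)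
  then show "x \<in> (\<lambda>s. r + d * s) ` {..<N div d}" by blast
qed

locale dirichlet_character =
  fixes N :: nat and \<chi> :: "nat \<Rightarrow> complex"
  assumes dirichlet_char: "dirichlet_char N \<chi>"
begin

lemma modulus_pos: "0 < N"
  using dirichlet_char unfolding dirichlet_char_def by blast

lemma one: "\<chi> 1 = 1"
  using dirichlet_char unfolding dirichlet_char_def by blast

lemma mult: "\<chi> (a * b) = \<chi> a * \<chi> b"
  using dirichlet_char unfolding dirichlet_char_def by blast

lemma eq_0_iff: "\<chi> a = 0 \<longleftrightarrow> \<not> coprime a N"
  using dirichlet_char unfolding dirichlet_char_def by blast

lemma add_mult_modulus: "\<chi> (a + N * q) = \<chi> a"
proof (induction q)
  case (Suc q)
  have "a + N * Suc q = (a + N * q) + N" by simp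
  then show ?case using Suc dirichlet_char unfolding dirichlet_char_def by metis
qed simp

lemma mod: "\<chi> (a mod N) = \<chi> a"
  using add_mult_modulus[of "a mod N" "a div N"] by simp

lemma eq_0_if_common_factor: "d dvd a \<Longrightarrow> d dvd N \<Longrightarrow> d \<noteq> 1 \<Longrightarrow> \<chi> a = 0"
  using eq_0_iff coprime_common_divisor_nat by blast

lemma modulus_minus: "t \<le> N \<Longrightarrow> \<chi> (N - t) = \<chi> (N - 1) * \<chi> t"
proof (cases "t = 0")
  case True
  then show ?thesis using add_mult_modulus[of 0 1] mult[of "N - 1" 0] by simp
next
  case False
  assume "t \<le> N"
  with False have "int ((N - 1) * t) = int ((N - t) + N * (t - 1))"
    by (simp add: of_nat_diff algebra_simps)
  then have "(N - 1) * t = (N - t) + N * (t - 1)" by (simp only: of_nat_eq_iff)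
  then have "\<chi> ((N - t) + N * (t - 1)) = \<chi> (N - 1) * \<chi> t" by (metis mult)
  then show ?thesis by (simp only: add_mult_modulus)
qed

definition char_ring :: "complex set" where
  "char_ring = {\<Sum>j<N. of_int (c j) * \<chi> j | c :: nat \<Rightarrow> int. True}"

lemma sum_in_char_ring: "(\<Sum>j<N. of_int (c j) * \<chi> j) \<in> char_ring"
  unfolding char_ring_def by blast

lemma value_in_char_ring: "\<chi> t \<in> char_ring"
proof -
  have "(\<Sum>j<N. of_int (if j = t mod N then 1 else 0) * \<chi> j) = (\<Sum>j<N. if j = t mod N then \<chi> j else 0)"
    by (intro sum.cong) auto
  also have "\<dots> = \<chi> t" using modulus_pos mod by simp
  finally show ?thesis using sum_in_char_ring by metis
qed

lemma char_ring_add: "y \<in> char_ring \<Longrightarrow> z \<in> char_ring \<Longrightarrow> y + z \<in> char_ring"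
proof -
  assume "y \<in> char_ring" "z \<in> char_ring"
  then obtain c d where "y = (\<Sum>j<N. of_int (c j) * \<chi> j)" "z = (\<Sum>j<N. of_int (d j) * \<chi> j)"
    unfolding char_ring_def by blast
  then have "y + z = (\<Sum>j<N. of_int (c j + d j) * \<chi> j)"
    by (simp add: sum.distrib distrib_right)
  then show ?thesis using sum_in_char_ring by metis
qed

lemma char_ring_of_int_mult: "y \<in> char_ring \<Longrightarrow> of_int a * y \<in> char_ring"
proof -
  assume "y \<in> char_ring"
  then obtain c where "y = (\<Sum>j<N. of_int (c j) * \<chi> j)"
    unfolding char_ring_def by blast
  then have "of_int a * y = (\<Sum>j<N. of_int (a * c j) * \<chi> j)"
    by (simp add: sum_distrib_left mult.assoc)
  then show ?thesis using sum_in_char_ring by metis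
qed

lemma zero_in_char_ring: "0 \<in> char_ring"
  using char_ring_of_int_mult[OF value_in_char_ring, of 0] by simp

lemma of_int_in_char_ring: "of_int a \<in> char_ring"
  using char_ring_of_int_mult[OF value_in_char_ring[of 1], of a] by (simp only: one mult_1_right)

lemma char_ring_sum: "(\<And>i. i \<in> A \<Longrightarrow> f i \<in> char_ring) \<Longrightarrow> (\<Sum>i\<in>A. f i) \<in> char_ring"
  by (induction A rule: infinite_finite_induct) (simp_all add: zero_in_char_ring char_ring_add)

lemma char_ring_mult: "y \<in> char_ring \<Longrightarrow> z \<in> char_ring \<Longrightarrow> y * z \<in> char_ring"
proof -
  assume "y \<in> char_ring" "z \<in> char_ring"
  then obtain c d where "y = (\<Sum>i<N. of_int (c i) * \<chi> i)" "z = (\<Sum>j<N. of_int (d j) * \<chi> j)"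
    unfolding char_ring_def by blast
  then have "y * z = (\<Sum>i<N. \<Sum>j<N. of_int (c i * d j) * \<chi> (i * j))"
    by (simp add: sum_product mult algebra_simps)
  also have "\<dots> \<in> char_ring"
    by (intro char_ring_sum char_ring_of_int_mult value_in_char_ring)
  finally show ?thesis .
qed

lemma char_ring_algebraic_int:
  assumes "y \<in> char_ring" shows "algebraic_int y"
proof (rule algebraic_int_if_int_span_stable)
  show "1 mod N < N" using modulus_pos by simp
  show "\<chi> (1 mod N) \<noteq> 0" by (simp only: mod one) simp
  show "\<exists>c. y * \<chi> i = (\<Sum>j<N. of_int (c j) * \<chi> j)" for i
    using char_ring_mult[OF assms value_in_char_ring, of i] unfolding char_ring_def by blast
qed

definition multiples :: "nat \<Rightarrow> complex set" where
  "multiples d = (\<lambda>z. of_nat d * z) ` char_ring"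

lemma of_nat_mult_in_multiples: "z \<in> char_ring \<Longrightarrow> of_nat d * z \<in> multiples d"
  unfolding multiples_def by blast

lemma char_ring_subset_multiples_1: "char_ring \<subseteq> multiples 1"
  unfolding multiples_def by simp

lemma zero_in_multiples: "0 \<in> multiples d"
  using of_nat_mult_in_multiples[OF zero_in_char_ring] by simp

lemma multiples_add: "y \<in> multiples d \<Longrightarrow> z \<in> multiples d \<Longrightarrow> y + z \<in> multiples d"
  unfolding multiples_def by (auto simp: distrib_left[symmetric] char_ring_add)

lemma multiples_of_int_mult: "y \<in> multiples d \<Longrightarrow> of_int a * y \<in> multiples d"
  unfolding multiples_def by (auto simp: mult.left_commute char_ring_of_int_mult)

lemma multiples_diff: "y \<in> multiples d \<Longrightarrow> z \<in> multiples d \<Longrightarrow> y - z \<in> multiples d"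
  using multiples_add[of y d "of_int (-1) * z"] multiples_of_int_mult[of z d "-1"] by simp

lemma multiples_uminus: "y \<in> multiples d \<Longrightarrow> - y \<in> multiples d"
  using multiples_diff[OF zero_in_multiples] by fastforce

lemma multiples_sum: "(\<And>i. i \<in> A \<Longrightarrow> f i \<in> multiples d) \<Longrightarrow> (\<Sum>i\<in>A. f i) \<in> multiples d"
  by (induction A rule: infinite_finite_induct) (simp_all add: zero_in_multiples multiples_add)

lemma multiples_of_nat_mult: "y \<in> multiples d \<Longrightarrow> of_nat e * y \<in> multiples (e * d)"
  unfolding multiples_def by (auto simp: mult.assoc)

lemma multiples_antimono: "d dvd e \<Longrightarrow> multiples e \<subseteq> multiples d"
proof
  fix y assume "d dvd e" "y \<in> multiples e"
  then obtain f z where "e = d * f" "z \<in> char_ring" "y = of_nat e * z"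
    unfolding multiples_def by blast
  then have "y = of_nat d * (of_int (int f) * z)" "of_int (int f) * z \<in> char_ring"
    using char_ring_of_int_mult[of z "int f"] by simp_all
  then show "y \<in> multiples d" by (simp add: of_nat_mult_in_multiples)
qed

lemma alg_cong0_if_in_multiples: "0 < d \<Longrightarrow> y \<in> multiples d \<Longrightarrow> alg_cong0 y d"
  unfolding multiples_def alg_cong0_def by (auto simp: char_ring_algebraic_int)

definition power_sum :: "nat \<Rightarrow> nat \<Rightarrow> complex" where
  "power_sum k M = (\<Sum>j<M. \<chi> j * of_nat j ^ k)"

lemma char_power_sum_eq_power_sum:
  assumes "N dvd M" "N \<noteq> 1"
  shows "char_power_sum k M \<chi> = power_sum k M"
proof -
  have "\<chi> 0 = 0" "\<chi> M = 0"
    using assms eq_0_if_common_factor[of N] by auto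
  moreover have "(\<Sum>j\<le>M. \<chi> j * of_nat j ^ k) = \<chi> 0 * 0 ^ k + (\<Sum>j=1..M. \<chi> j * of_nat j ^ k)"
    by (simp add: atLeast0AtMost[symmetric] sum.atLeast_Suc_atMost)
  ultimately show ?thesis
    unfolding char_power_sum_def power_sum_def by (simp add: lessThan_Suc_atMost[symmetric])
qed

lemma of_nat_in_char_ring: "of_nat n \<in> char_ring"
  using of_int_in_char_ring[of "int n"] by simp

lemma power_sum_in_char_ring: "power_sum k M \<in> char_ring"
  unfolding power_sum_def
  by (intro char_ring_sum char_ring_mult value_in_char_ring)
     (metis of_nat_in_char_ring of_nat_power)

lemma power_diff_in_multiples:
  "\<chi> t * (of_nat (r + h * s) ^ k - of_nat r ^ k) \<in> multiples h"
proof -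
  have "[int (r + h * s) ^ k = int r ^ k] (mod int h)"
    by (intro cong_pow) (simp add: cong_def)
  then have "int h dvd int (r + h * s) ^ k - int r ^ k"
    by (simp add: cong_iff_dvd_diff)
  then obtain z where "int (r + h * s) ^ k - int r ^ k = int h * z" by (elim dvdE)
  then have "(of_nat (r + h * s) ^ k - of_nat r ^ k :: complex) = of_nat h * of_int z"
    by (metis of_int_diff of_int_mult of_int_of_nat_eq of_int_power)
  then show ?thesis
    using of_nat_mult_in_multiples[OF char_ring_of_int_mult[OF value_in_char_ring, of z t], of h]
    by (simp add: algebra_simps)
qed

text \<open>The parity of \<open>N\<close> makes \<open>\<chi>\<close> vanish on even numbers, and odd powers are \<open>1\<close> modulo \<open>2\<close>.\<close>
lemma power_sum_diff_power_sum_0_in_multiples_2: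
  assumes "even N"
  shows "power_sum k h - power_sum 0 h \<in> multiples 2"
proof -
  have "\<chi> r * (of_nat r ^ k - 1) \<in> multiples 2" for r
  proof (cases "even r")
    case True
    then show ?thesis using assms eq_0_if_common_factor[of 2 r] zero_in_multiples by simp
  next
    case False
    then have "even (int r ^ k - 1)" by simp
    then obtain z where "int r ^ k - 1 = 2 * z" by (elim evenE)
    then have "(of_nat r ^ k - 1 :: complex) = of_nat 2 * of_int z"
      by (metis of_int_1 of_int_diff of_int_mult of_int_of_nat_eq of_int_power of_nat_numeral)
    then show ?thesis
      using of_nat_mult_in_multiples[OF char_ring_of_int_mult[OF value_in_char_ring, of z r], of 2]
      by (simp add: algebra_simps)
  qed
  then have "(\<Sum>r<h. \<chi> r * (of_nat r ^ k - 1)) \<in> multiples 2"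
    by (intro multiples_sum)
  then show ?thesis
    unfolding power_sum_def by (simp add: sum_subtractf algebra_simps)
qed

lemma power_sum_mult_period:
  assumes "N dvd h"
  shows "power_sum k (h * q)
    = of_nat q * power_sum k h + (\<Sum>r<h. \<Sum>s<q. \<chi> r * (of_nat (r + h * s) ^ k - of_nat r ^ k))"
proof -
  have periodic: "\<chi> (r + h * s) = \<chi> r" for r s
    using assms add_mult_modulus by (metis dvdE mult.assoc)
  have "power_sum k (h * q) = (\<Sum>r<h. \<Sum>s<q. \<chi> r * of_nat r ^ k + \<chi> r * (of_nat (r + h * s) ^ k - of_nat r ^ k))"
    unfolding power_sum_def sum_lessThan_mult_nat periodic by (simp add: right_diff_distrib)
  then show ?thesis
    unfolding power_sum_def by (simp add: sum.distrib sum_distrib_left mult.commute)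
qed

text \<open>For \<open>k = 0\<close> the sum vanishes, so the first hypothesis (with \<open>0 - 1 = 0\<close>) is then void.\<close>
lemma sum_power_diff_in_multiples:
  assumes "power_sum (k - 1) h \<in> multiples e" "d dvd k * h * e" "d dvd h\<^sup>2"
  shows "(\<Sum>r<h. \<chi> r * (of_nat (r + h) ^ k - of_nat r ^ k)) \<in> multiples d"
proof (cases k)
  case 0
  then show ?thesis using zero_in_multiples by simp
next
  case (Suc k')
  obtain Q where Q: "(int r + int h) ^ Suc k'
      = int r ^ Suc k' + int (Suc k') * int h * int r ^ k' + (int h)\<^sup>2 * Q r" for r
    using power_Suc_add_eq[of "int _" "int h" k'] by metis
  have expand: "(of_nat (r + h) :: complex) ^ Suc k' - of_nat r ^ Suc k'
      = of_nat (Suc k') * of_nat h * of_nat r ^ k' + of_nat (h\<^sup>2) * of_int (Q r)" for r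
    using arg_cong[OF Q, of "of_int :: int \<Rightarrow> complex", of r] by simp
  have "(\<Sum>r<h. \<chi> r * (of_nat (r + h) ^ k - of_nat r ^ k))
      = of_nat (k * h) * power_sum k' h + of_nat (h\<^sup>2) * (\<Sum>r<h. of_int (Q r) * \<chi> r)"
    unfolding Suc expand power_sum_def by (simp add: sum.distrib sum_distrib_left algebra_simps)
  moreover have "of_nat (k * h) * power_sum k' h \<in> multiples d"
  proof -
    have "of_nat (k * h) * power_sum k' h \<in> multiples (k * h * e)"
      using multiples_of_nat_mult[of _ e "k * h"] assms(1) Suc by simp
    then show ?thesis using multiples_antimono[OF assms(2)] by blast
  qed
  moreover have "of_nat (h\<^sup>2) * (\<Sum>r<h. of_int (Q r) * \<chi> r) \<in> multiples d"
  proof -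
    have "(\<Sum>r<h. of_int (Q r) * \<chi> r) \<in> char_ring"
      by (intro char_ring_sum char_ring_of_int_mult value_in_char_ring)
    then show ?thesis using of_nat_mult_in_multiples multiples_antimono[OF assms(3)] by blast
  qed
  ultimately show ?thesis by (simp add: multiples_add)
qed

end

locale primitive_character = dirichlet_character +
  assumes primitive: "primitive_char N \<chi>"
begin

text \<open>Multiplication by a unit \<open>a \<equiv> 1 (mod d)\<close> with \<open>\<chi> a \<noteq> 1\<close> permutes the residues
  below \<open>N\<close> that are congruent to \<open>r\<close> modulo \<open>d\<close>.\<close>
lemma sum_residue_class_eq_0:
  assumes "d dvd N" "d < N" "r < d"
  shows "(\<Sum>s<N div d. \<chi> (r + d * s)) = 0"
proof -
  obtain a where a: "coprime a N" "[a = 1] (mod d)" "\<chi> a \<noteq> 1"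
    using primitive assms(1,2) unfolding primitive_char_def by blast
  define A where "A = {x. x < N \<and> x mod d = r}"
  have "(\<lambda>s. r + d * s) ` {..<N div d} = A"
    unfolding A_def using assms(1,3) by (rule image_residue_class)
  moreover have "inj_on (\<lambda>s. r + d * s) {..<N div d}"
    using assms(3) by (auto simp: inj_on_def)
  ultimately have class_sum: "(\<Sum>s<N div d. \<chi> (r + d * s)) = (\<Sum>x\<in>A. \<chi> x)"
    using sum.reindex[of "\<lambda>s. r + d * s" "{..<N div d}" \<chi>] by simp
  define f where "f x = a * x mod N" for x
  have "f ` A \<subseteq> A"
  proof
    fix y assume "y \<in> f ` A"
    then obtain x where "x \<in> A" "y = f x" by blast
    moreover have "a * x mod d = x mod d"
      using cong_scalar_right[OF a(2), of x] by (simp add: cong_def)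
    ultimately show "y \<in> A"
      using modulus_pos assms(1) unfolding A_def f_def by (simp add: mod_mod_cancel)
  qed
  moreover have "inj_on f A"
  proof
    fix x y assume "x \<in> A" "y \<in> A" "f x = f y"
    then have "[x = y] (mod N)"
      using cong_mult_lcancel_nat[OF a(1)] unfolding f_def cong_def by blast
    with \<open>x \<in> A\<close> \<open>y \<in> A\<close> show "x = y" unfolding A_def cong_def by simp
  qed
  ultimately have "f ` A = A" by (simp add: endo_inj_surj A_def)
  then have "(\<Sum>x\<in>A. \<chi> x) = (\<Sum>x\<in>A. \<chi> (f x))"
    using sum.reindex[OF \<open>inj_on f A\<close>, of \<chi>] by simp
  also have "\<dots> = \<chi> a * (\<Sum>x\<in>A. \<chi> x)"
    unfolding f_def by (simp add: mod mult sum_distrib_left)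
  finally have "(\<chi> a - 1) * (\<Sum>x\<in>A. \<chi> x) = 0" by (simp add: algebra_simps)
  with a(3) class_sum show ?thesis by simp
qed

lemma power_sum_in_multiples_of_proper_divisor:
  assumes "h dvd N" "h < N"
  shows "power_sum k N \<in> multiples h"
proof -
  define q where "q = N div h"
  have "N = h * q" using assms(1) unfolding q_def by simp
  then have "power_sum k N = (\<Sum>r<h. \<Sum>s<q. \<chi> (r + h * s) * of_nat (r + h * s) ^ k)"
    unfolding power_sum_def by (simp only: sum_lessThan_mult_nat)
  also have "\<dots> = (\<Sum>r<h. of_nat r ^ k * (\<Sum>s<q. \<chi> (r + h * s)))
      + (\<Sum>r<h. \<Sum>s<q. \<chi> (r + h * s) * (of_nat (r + h * s) ^ k - of_nat r ^ k))"
    by (simp add: sum.distrib[symmetric] sum_distrib_left algebra_simps)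
  also have "(\<Sum>r<h. of_nat r ^ k * (\<Sum>s<q. \<chi> (r + h * s))) = 0"
    using sum_residue_class_eq_0[OF assms] unfolding q_def by simp
  finally have "power_sum k N
      = (\<Sum>r<h. \<Sum>s<q. \<chi> (r + h * s) * (of_nat (r + h * s) ^ k - of_nat r ^ k))"
    by (simp only: add_0)
  then show ?thesis by (simp only:) (intro multiples_sum power_diff_in_multiples)
qed

lemma add_half_modulus:
  assumes "N = 2 * h" "r < h"
  shows "\<chi> (r + h) = - \<chi> r"
proof -
  have "(\<Sum>s<N div h. \<chi> (r + h * s)) = 0"
    using assms by (intro sum_residue_class_eq_0) auto
  then show ?thesis using assms by (simp add: numeral_2_eq_2 eq_neg_iff_add_eq_0 add.commute)
qed

lemma power_sum_eq_neg_sum_power_diff: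
  assumes "N = 2 * h"
  shows "power_sum k N = - (\<Sum>r<h. \<chi> r * (of_nat (r + h) ^ k - of_nat r ^ k))"
proof -
  have "power_sum k N = (\<Sum>r<h. \<Sum>s<2. \<chi> (r + h * s) * of_nat (r + h * s) ^ k)"
    unfolding power_sum_def assms mult.commute[of 2] by (rule sum_lessThan_mult_nat)
  also have "\<dots> = (\<Sum>r<h. \<chi> r * of_nat r ^ k - \<chi> r * of_nat (r + h) ^ k)"
    using add_half_modulus[OF assms] by (intro sum.cong) (simp_all add: numeral_2_eq_2)
  finally show ?thesis by (simp add: sum_negf[symmetric] algebra_simps)
qed

text \<open>Write \<open>N = 4 g\<close> and \<open>c = \<chi> (-1)\<close>. Since \<open>\<chi> (x + 2 g) = - \<chi> x\<close>, the reflection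
  \<open>x \<mapsto> 2 g - x\<close> multiplies \<open>\<chi>\<close> by \<open>-c\<close>, so the second half of the sum over \<open>[0, 2 g)\<close>
  is \<open>-c\<close> times the first half, and \<open>1 - c \<in> {0, 2}\<close>.\<close>
lemma power_sum_0_half_in_multiples_2:
  assumes N: "N = 4 * g" and "even g"
  shows "power_sum 0 (2 * g) \<in> multiples 2"
proof -
  define c where "c = \<chi> (N - 1)"
  have vanish: "\<chi> x = 0" if "even x" for x
    using that N eq_0_if_common_factor[of 2 x] by simp
  have "\<chi> 1 = c * c"
    using modulus_minus[of "N - 1"] modulus_pos unfolding c_def by simp
  then have c: "c = 1 \<or> c = -1"
    by (metis one power2_eq_1_iff power2_eq_square)
  have reflect: "\<chi> (2 * g - t) = - c * \<chi> t" if "0 < t" "t \<le> g" for t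
  proof -
    have "\<chi> (2 * g - t) = - \<chi> (2 * g - t + 2 * g)"
      using add_half_modulus[of "2 * g" "2 * g - t"] N that by simp
    also have "2 * g - t + 2 * g = N - t" using N that by simp
    finally show ?thesis using modulus_minus[of t] N that unfolding c_def by simp
  qed
  have "(\<Sum>r<g. \<chi> (g - r)) = (\<Sum>r<g. \<chi> (Suc (g - Suc r)))"
    by (intro sum.cong) (simp_all add: Suc_diff_Suc)
  also have "\<dots> = (\<Sum>r<g. \<chi> (Suc r))"
    by (rule sum.nat_diff_reindex)
  also have "\<dots> = (\<Sum>r<g. \<chi> r)"
    using sum.lessThan_Suc_shift[of \<chi> g] vanish[of 0] vanish[OF \<open>even g\<close>] by simp
  finally have reverse: "(\<Sum>r<g. \<chi> (g - r)) = (\<Sum>r<g. \<chi> r)" .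
  have "power_sum 0 (2 * g) = (\<Sum>r<g. \<chi> r) + (\<Sum>r<g. \<chi> (g + r))"
    unfolding power_sum_def mult_2 sum_lessThan_add_nat by simp
  also have "(\<Sum>r<g. \<chi> (g + r)) = (\<Sum>r<g. - c * \<chi> (g - r))"
  proof (intro sum.cong refl)
    fix r assume "r \<in> {..<g}"
    then show "\<chi> (g + r) = - c * \<chi> (g - r)"
      using reflect[of "g - r"] by (simp add: numeral_2_eq_2)
  qed
  also have "\<dots> = - c * (\<Sum>r<g. \<chi> r)"
    by (simp only: sum_distrib_left[symmetric] reverse)
  finally have "power_sum 0 (2 * g) = (1 - c) * (\<Sum>r<g. \<chi> r)"
    by (simp add: algebra_simps)
  moreover have "(\<Sum>r<g. \<chi> r) \<in> char_ring"
    by (intro char_ring_sum value_in_char_ring)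
  ultimately show ?thesis
    using c of_nat_mult_in_multiples[of _ 2] zero_in_multiples by auto
qed

lemma power_sum_prime_power_in_multiples:
  assumes "prime p" "N = p ^ m" "1 \<le> m" "m \<le> n"
  shows "power_sum k (p ^ n) \<in> multiples (p ^ (n - 1))"
  using \<open>m \<le> n\<close>
proof (induction n rule: dec_induct)
  case base
  have "p ^ (m - 1) dvd p ^ m" "p ^ (m - 1) < p ^ m"
    using assms prime_gt_1_nat by (simp_all add: le_imp_power_dvd)
  then show ?case
    using power_sum_in_multiples_of_proper_divisor assms(2) by simp
next
  case (step n)
  have "N dvd p ^ n" using assms(2) step(1) by (simp add: le_imp_power_dvd)
  then have "power_sum k (p ^ Suc n) = of_nat p * power_sum k (p ^ n)
      + (\<Sum>r<p ^ n. \<Sum>s<p. \<chi> r * (of_nat (r + p ^ n * s) ^ k - of_nat r ^ k))"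
    using power_sum_mult_period[of "p ^ n" k p] by (simp add: mult.commute)
  moreover have "of_nat p * power_sum k (p ^ n) \<in> multiples (p ^ n)"
    using multiples_of_nat_mult[OF step(3), of p] assms(3) step(1)
    by (simp add: power_eq_if)
  moreover have "(\<Sum>r<p ^ n. \<Sum>s<p. \<chi> r * (of_nat (r + p ^ n * s) ^ k - of_nat r ^ k))
      \<in> multiples (p ^ n)"
    by (intro multiples_sum power_diff_in_multiples)
  ultimately show ?case by (simp add: multiples_add)
qed

lemma power_sum_modulus_two_power_in_multiples:
  assumes N: "N = 2 ^ m" and "2 \<le> m" "even k \<or> 3 \<le> m"
  shows "power_sum k N \<in> multiples N"
proof -
  define h :: nat where "h = 2 ^ (m - 1)"
  have "N = 2 * h" "2 ^ m dvd h\<^sup>2"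
    using N \<open>2 \<le> m\<close> unfolding h_def
    by (simp_all add: power_eq_if le_imp_power_dvd flip: power_mult)
  from \<open>N = 2 * h\<close> have "power_sum k N = - (\<Sum>r<h. \<chi> r * (of_nat (r + h) ^ k - of_nat r ^ k))"
    by (rule power_sum_eq_neg_sum_power_diff)
  moreover have "(\<Sum>r<h. \<chi> r * (of_nat (r + h) ^ k - of_nat r ^ k)) \<in> multiples (2 ^ m)"
    using \<open>even k \<or> 3 \<le> m\<close>
  proof
    assume "even k"
    then have "2 ^ m dvd k * h * 1" using \<open>N = 2 * h\<close> N by auto
    then show ?thesis
      using sum_power_diff_in_multiples \<open>2 ^ m dvd h\<^sup>2\<close> power_sum_in_char_ring
        char_ring_subset_multiples_1 by blast
  next
    assume "3 \<le> m"
    then have "m - 1 = Suc (m - 2)" "m - 2 \<noteq> 0" by simp_all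
    then have "h = 2 * 2 ^ (m - 2)" "N = 4 * 2 ^ (m - 2)" "even (2 ^ (m - 2) :: nat)"
      using \<open>N = 2 * h\<close> unfolding h_def by simp_all
    then have "power_sum (k - 1) h - power_sum 0 h \<in> multiples 2" "power_sum 0 h \<in> multiples 2"
      using power_sum_diff_power_sum_0_in_multiples_2 power_sum_0_half_in_multiples_2 N by simp_all
    then have "power_sum (k - 1) h \<in> multiples 2"
      using multiples_add by fastforce
    moreover have "2 ^ m dvd k * h * 2" using \<open>N = 2 * h\<close> N by simp
    ultimately show ?thesis
      using sum_power_diff_in_multiples \<open>2 ^ m dvd h\<^sup>2\<close> by blast
  qed
  ultimately show ?thesis using N multiples_uminus by simp
qed

lemma power_sum_two_power_in_multiples:
  assumes N: "N = 2 ^ m" and "2 \<le> m" "even k \<or> 3 \<le> m" "m \<le> n"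
  shows "power_sum k (2 ^ n) \<in> multiples (2 ^ n)"
  using \<open>m \<le> n\<close>
proof (induction n rule: dec_induct)
  case base
  then show ?case using power_sum_modulus_two_power_in_multiples assms(1-3) by simp
next
  case (step n)
  define h :: nat where "h = 2 ^ n"
  have "N dvd h" using N step(1) unfolding h_def by (simp add: le_imp_power_dvd)
  then have "power_sum k (2 ^ Suc n)
      = 2 * power_sum k h + (\<Sum>r<h. \<chi> r * (of_nat (r + h) ^ k - of_nat r ^ k))"
    using power_sum_mult_period[of h k 2] unfolding h_def
    by (simp add: numeral_2_eq_2 mult.commute)
  moreover have "2 * power_sum k h \<in> multiples (2 ^ Suc n)"
    using multiples_of_nat_mult[OF step(3), of 2] unfolding h_def by simp
  moreover have "(\<Sum>r<h. \<chi> r * (of_nat (r + h) ^ k - of_nat r ^ k)) \<in> multiples (2 ^ Suc n)"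
  proof (rule sum_power_diff_in_multiples)
    show "power_sum (k - 1) h \<in> multiples (2 ^ (n - 1))"
      unfolding h_def using power_sum_prime_power_in_multiples N step(1) \<open>2 \<le> m\<close> by simp
    have "Suc n \<le> n + (n - 1)" "Suc n \<le> n * 2" using step(1) \<open>2 \<le> m\<close> by simp_all
    then have "2 ^ Suc n dvd h * 2 ^ (n - 1)" "2 ^ Suc n dvd h\<^sup>2"
      unfolding h_def power_add[symmetric] power_mult[symmetric] by (blast intro: le_imp_power_dvd)+
    then show "2 ^ Suc n dvd k * h * 2 ^ (n - 1)" "2 ^ Suc n dvd h\<^sup>2"
      by (simp_all add: dvd_mult mult.assoc)
  qed
  ultimately show ?case by (simp add: multiples_add)
qed

end

text \<open>Modulo \<open>2\<close> the only character is principal, which is induced from modulus \<open>1\<close>.\<close>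
lemma not_primitive_char_2: "\<not> primitive_char 2 \<chi>"
proof
  assume prim: "primitive_char 2 \<chi>"
  then interpret dirichlet_character 2 \<chi>
    by unfold_locales (simp add: primitive_char_def)
  have "\<chi> a = 1" if "coprime a 2" for a
  proof -
    from that have "a mod 2 = 1" by (simp add: odd_iff_mod_2_eq_one)
    then show ?thesis using mod[of a] one by metis
  qed
  moreover have "(1::nat) dvd 2 \<and> (1::nat) < 2" by simp
  ultimately show False using prim unfolding primitive_char_def by blast
qed

theorem lemma2p4:
  fixes p m :: nat and \<chi> :: "nat \<Rightarrow> complex"
  assumes "prime p" and "m \<ge> 1" and "primitive_char (p ^ m) \<chi>"
  shows "(\<forall>n k. n \<ge> m \<longrightarrow> alg_cong0 (char_power_sum k (p ^ n) \<chi>) (p ^ (n - 1)))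
       \<and> (p = 2 \<longrightarrow>
           (\<forall>k. (m \<ge> 3 \<or> (m = 2 \<and> even k) \<or> (m = 1 \<and> odd k)) \<longrightarrow>
             (\<forall>n. n \<ge> max m 2 \<longrightarrow> alg_cong0 (char_power_sum k (2 ^ n) \<chi>) (2 ^ n))))"
proof -
  interpret primitive_character "p ^ m" \<chi>
    using assms(3) by unfold_locales (simp_all add: primitive_char_def)
  have p: "1 < p" using assms(1) prime_gt_1_nat by blast
  have alg_cong0: "alg_cong0 (char_power_sum k (p ^ n) \<chi>) d"
    if "m \<le> n" "0 < d" "power_sum k (p ^ n) \<in> multiples d" for k n d
    using that assms(2) p char_power_sum_eq_power_sum[of "p ^ n"] alg_cong0_if_in_multiples
    by (simp add: le_imp_power_dvd)
  show ?thesis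
  proof (intro conjI allI impI)
    fix n k :: nat assume "m \<le> n"
    then show "alg_cong0 (char_power_sum k (p ^ n) \<chi>) (p ^ (n - 1))"
      using alg_cong0 power_sum_prime_power_in_multiples[OF assms(1) refl assms(2)] p by simp
  next
    fix k n :: nat assume "p = 2" and "m \<ge> 3 \<or> (m = 2 \<and> even k) \<or> (m = 1 \<and> odd k)"
      and "max m 2 \<le> n"
    moreover have "m \<noteq> 1" using not_primitive_char_2 assms(3) \<open>p = 2\<close> by auto
    ultimately have "2 \<le> m" "even k \<or> 3 \<le> m" "m \<le> n" by auto
    then have "power_sum k (2 ^ n) \<in> multiples (2 ^ n)"
      using power_sum_two_power_in_multiples \<open>p = 2\<close> by simp
    then show "alg_cong0 (char_power_sum k (2 ^ n) \<chi>) (2 ^ n)"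
      using alg_cong0[of n "2 ^ n" k] \<open>m \<le> n\<close> \<open>p = 2\<close> by simp
  qed
qed

end
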